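(* Let $D$ be a finite archimedean division semialgebra over $\mathbb{Z}_\mathrm{max}$. Then $\mathrm{ui}(D/\mathbb{Z}_\mathrm{max})<\infty$.
   Context: A (possibly noncommutative) semiring has a commutative associative addition with identity $0$ and an associative multiplication with identity $1$, satisfying both distributive laws; a division semiring is one in which every nonzero element is invertible. $\mathbb{Z}_\mathrm{max}=\mathbb{Z}\cup\{-\infty\}$ is the semifield with addition $\max$ and multiplication ordinary addition. A division semialgebra over a semifield $K$ is a division semiring $D$ with an injective homomorphism from $K$ into the center of $D$ (identify $K$ with its image); it is finite if $D$ is finitely generated as a left $K$-semimodule. For idempotent $K$, $D$ is archimedean over $K$ if for every $x\in D$ there exists $y\in K$ with $x+y=y$. The unit index is $\mathrm{ui}(D/K)=|D^\times/K^\times|$. *)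

theory Defs
  imports Main
begin

text \<open>The semifield Z_max = Z \<union> {-\<infinity>}: None represents -\<infinity>, Some n represents n.
  Addition is max, multiplication is ordinary addition (-\<infinity> absorbing).\<close>

type_synonym zmax = "int option"

fun zmax_add :: "zmax \<Rightarrow> zmax \<Rightarrow> zmax" where
  "zmax_add None y = y"
| "zmax_add x None = x"
| "zmax_add (Some a) (Some b) = Some (max a b)"

fun zmax_mul :: "zmax \<Rightarrow> zmax \<Rightarrow> zmax" where
  "zmax_mul (Some a) (Some b) = Some (a + b)"
| "zmax_mul _ _ = None"

definition zmax_zero :: zmax where "zmax_zero = None"
definition zmax_one :: zmax where "zmax_one = Some 0"

definition units_of_sr :: "'d::{semiring,comm_monoid_add,monoid_mult} set" where
  "units_of_sr = {x. \<exists>y. x * y = 1 \<and> y * x = 1}"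

definition division_semiring :: "'d::{semiring,comm_monoid_add,monoid_mult} itself \<Rightarrow> bool" where
  "division_semiring _ \<longleftrightarrow> (\<forall>x::'d. x \<noteq> 0 \<longrightarrow> x \<in> units_of_sr)"

definition center_sr :: "'d::{semiring,comm_monoid_add,monoid_mult} set" where
  "center_sr = {z. \<forall>x. z * x = x * z}"

definition zmax_semialgebra :: "(zmax \<Rightarrow> 'd::{semiring,comm_monoid_add,monoid_mult}) \<Rightarrow> bool" where
  "zmax_semialgebra phi \<longleftrightarrow>
     division_semiring TYPE('d) \<and>
     phi zmax_zero = 0 \<and> phi zmax_one = 1 \<and>
     (\<forall>a b. phi (zmax_add a b) = phi a + phi b) \<and>
     (\<forall>a b. phi (zmax_mul a b) = phi a * phi b) \<and>
     inj phi \<and> range phi \<subseteq> center_sr"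

text \<open>Finite: D is finitely generated as a left Z_max-semimodule (action k.x = phi k * x).\<close>
definition finite_semialgebra :: "(zmax \<Rightarrow> 'd::{semiring,comm_monoid_add,monoid_mult}) \<Rightarrow> bool" where
  "finite_semialgebra phi \<longleftrightarrow>
     (\<exists>G::'d set. finite G \<and> (\<forall>x. \<exists>c::'d \<Rightarrow> zmax. x = (\<Sum>g\<in>G. phi (c g) * g)))"

definition archimedean_over :: "(zmax \<Rightarrow> 'd::{semiring,comm_monoid_add,monoid_mult}) \<Rightarrow> bool" where
  "archimedean_over phi \<longleftrightarrow> (\<forall>x::'d. \<exists>y\<in>range phi. x + y = y)"

definition zmax_units :: "zmax set" where
  "zmax_units = {k. \<exists>l. zmax_mul k l = zmax_one \<and> zmax_mul l k = zmax_one}"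

text \<open>The quotient group D^\<times>/K^\<times>, as the set of cosets x K^\<times>, where K^\<times> = phi(Z).\<close>
definition unit_quotient :: "(zmax \<Rightarrow> 'd::{semiring,comm_monoid_add,monoid_mult}) \<Rightarrow> 'd set set" where
  "unit_quotient phi = (\<lambda>x. (\<lambda>k. x * k) ` (phi ` zmax_units)) ` units_of_sr"

end

theory Submission
  imports Defs
begin

text \<open>Since \<open>1 + 1 = 1\<close> in \<open>\<int>\<^sub>max\<close>, the semiring \<open>D\<close> is idempotent and carries the natural
  order \<open>x \<preceq> y \<longleftrightarrow> x + y = y\<close>, compatible with multiplication. Write \<open>t^n\<close> for the image of
  \<open>n \<in> \<int>\<close> (\<open>iota n\<close> below). The archimedean property puts every element below some \<open>t^n\<close>,
  and invertibility puts every nonzero element above some \<open>t^m\<close>. Hence every coset \<open>u K\<^sup>\<times>\<close>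
  contains an element \<open>x\<close> with \<open>x \<preceq> 1\<close> but not \<open>x \<preceq> t^(-1)\<close>, and it suffices to show that
  there are only finitely many such \<open>x\<close>. Bracket the finitely many generators \<open>g\<close> as
  \<open>t^(-N) \<preceq> g \<preceq> t^N\<close> and write \<open>x = \<Sum> t^(k_g) g\<close>. Some term is not below \<open>t^(-1)\<close>, so
  \<open>t^(-2N) \<preceq> x\<close>; adding \<open>t^(-2N)\<close> to every term then absorbs the terms with \<open>k_g < -3N\<close>,
  while \<open>x \<preceq> 1\<close> forces \<open>k_g \<le> N\<close>. So \<open>x\<close> is \<open>t^(-2N)\<close> plus the sum of a subset of a fixed
  finite set.\<close>

definition natural_le :: "'a::ab_semigroup_add \<Rightarrow> 'a \<Rightarrow> bool" (infix "\<preceq>" 50)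
  where "x \<preceq> y \<longleftrightarrow> x + y = y"

lemma natural_le_trans [trans]: "x \<preceq> y \<Longrightarrow> y \<preceq> z \<Longrightarrow> x \<preceq> z"
  unfolding natural_le_def by (metis add.assoc)

lemma natural_le_add: "x \<preceq> z \<Longrightarrow> y \<preceq> z \<Longrightarrow> x + y \<preceq> z"
  unfolding natural_le_def by (metis add.assoc)

lemma natural_le_add_right:
  assumes "\<And>z::'a::ab_semigroup_add. z + z = z" shows "x \<preceq> x + (y::'a)"
  unfolding natural_le_def by (metis add.assoc assms)

lemma zero_natural_le: "0 \<preceq> (x::'a::comm_monoid_add)"
  by (simp add: natural_le_def)

lemma natural_le_zero_iff: "x \<preceq> 0 \<longleftrightarrow> x = (0::'a::comm_monoid_add)"
  by (simp add: natural_le_def)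

lemma natural_le_mult_left: "x \<preceq> y \<Longrightarrow> z * x \<preceq> z * (y::'a::semiring)"
  unfolding natural_le_def by (metis distrib_left)

lemma natural_le_mult_right: "x \<preceq> y \<Longrightarrow> x * z \<preceq> y * (z::'a::semiring)"
  unfolding natural_le_def by (metis distrib_right)

lemma sum_natural_le:
  "finite A \<Longrightarrow> (\<And>a. a \<in> A \<Longrightarrow> f a \<preceq> z) \<Longrightarrow> sum f A \<preceq> (z::'a::comm_monoid_add)"
  by (induction A rule: finite_induct) (auto simp: zero_natural_le natural_le_add)

lemma member_natural_le_sum:
  fixes f :: "'b \<Rightarrow> 'a::comm_monoid_add"
  assumes "\<And>z::'a. z + z = z" "finite A" "a \<in> A"
  shows "f a \<preceq> sum f A"
  using assms by (simp add: sum.remove natural_le_add_right)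

lemma sum_image_idem:
  fixes f :: "'b \<Rightarrow> 'a::comm_monoid_add"
  assumes idem: "\<And>z::'a. z + z = z" and "finite A"
  shows "sum f A = \<Sum> (f ` A)"
  using \<open>finite A\<close>
proof (induction A rule: finite_induct)
  case (insert a A)
  show ?case
  proof (cases "f a \<in> f ` A")
    case True
    then have "f a \<preceq> \<Sum> (f ` A)"
      using member_natural_le_sum[OF idem, of "f ` A" "f a" id] insert by simp
    then show ?thesis using insert True by (simp add: natural_le_def insert_absorb)
  qed (use insert in simp)
qed simp

lemma sum_eq_absorb:
  fixes f :: "'b \<Rightarrow> 'a::comm_monoid_add"
  assumes idem: "\<And>z::'a. z + z = z" and "finite A" and z: "z \<preceq> sum f A"
  shows "sum f A = z + \<Sum> ((\<lambda>a. f a + z) ` A)"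
proof -
  have "sum (\<lambda>_. z) A \<preceq> z"
    using idem by (intro sum_natural_le[OF \<open>finite A\<close>]) (simp add: natural_le_def)
  have "z + sum (\<lambda>a. f a + z) A = (sum (\<lambda>_. z) A + z) + sum f A"
    by (simp add: sum.distrib ac_simps)
  also have "\<dots> = z + sum f A"
    using \<open>sum (\<lambda>_. z) A \<preceq> z\<close> by (simp add: natural_le_def)
  also have "\<dots> = sum f A"
    using z by (simp add: natural_le_def)
  finally show ?thesis
    using sum_image_idem[OF idem \<open>finite A\<close>] by simp
qed

lemma zmax_units_eq_range_Some: "zmax_units = range Some"
proof (intro set_eqI iffI)
  fix k assume "k \<in> zmax_units"
  then obtain l where "zmax_mul k l = zmax_one" by (auto simp: zmax_units_def)
  then show "k \<in> range Some" by (cases k; cases l) (auto simp: zmax_one_def)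
next
  fix k :: zmax assume "k \<in> range Some"
  then obtain a where "k = Some a" by blast
  then show "k \<in> zmax_units"
    by (auto simp: zmax_units_def zmax_one_def intro!: exI[of _ "Some (- a)"])
qed

locale archimedean_zmax_semialgebra =
  fixes phi :: "zmax \<Rightarrow> 'd::{semiring,comm_monoid_add,monoid_mult}"
  assumes semialgebra: "zmax_semialgebra phi"
    and archimedean: "archimedean_over phi"
begin

definition iota :: "int \<Rightarrow> 'd" where "iota n = phi (Some n)"

lemma phi_None: "phi None = 0"
  using semialgebra by (simp add: zmax_semialgebra_def zmax_zero_def)

lemma iota_0: "iota 0 = 1"
  using semialgebra by (simp add: zmax_semialgebra_def zmax_one_def iota_def)

lemma phi_add: "phi (zmax_add a b) = phi a + phi b"
  using semialgebra by (simp add: zmax_semialgebra_def)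

lemma phi_mult: "phi (zmax_mul a b) = phi a * phi b"
  using semialgebra by (simp add: zmax_semialgebra_def)

lemma iota_add: "iota a + iota b = iota (max a b)"
  using phi_add[of "Some a" "Some b"] by (simp add: iota_def)

lemma iota_mult: "iota a * iota b = iota (a + b)"
  using phi_mult[of "Some a" "Some b"] by (simp add: iota_def)

lemma phi_central: "phi k * x = x * phi k"
  using semialgebra unfolding zmax_semialgebra_def center_sr_def by blast

lemma nonzero_unit: "(x::'d) \<noteq> 0 \<Longrightarrow> x \<in> units_of_sr"
  using semialgebra by (auto simp: zmax_semialgebra_def division_semiring_def)

lemma add_idem: "x + x = (x::'d)"
proof -
  have "x + x = x * (1 + 1)" by (simp add: distrib_left)
  also have "(1 + 1 :: 'd) = 1" using iota_add[of 0 0] by (simp add: iota_0)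
  finally show ?thesis by simp
qed

lemma iota_le_iff: "iota a \<preceq> iota b \<longleftrightarrow> a \<le> b"
proof -
  have "inj phi" using semialgebra by (simp add: zmax_semialgebra_def)
  have "iota a \<preceq> iota b \<longleftrightarrow> iota (max a b) = iota b"
    by (simp add: natural_le_def iota_add)
  also have "\<dots> \<longleftrightarrow> max a b = b"
    using \<open>inj phi\<close> by (auto simp: iota_def dest: injD)
  finally show ?thesis by auto
qed

lemma bounded_above: "\<exists>a. x \<preceq> iota a"
proof -
  obtain c where c: "x + phi c = phi c"
    using archimedean by (auto simp: archimedean_over_def)
  show ?thesis
  proof (cases c)
    case None
    then show ?thesis using c by (simp add: phi_None zero_natural_le)
  qed (use c in \<open>auto simp: natural_le_def iota_def\<close>)
qed

text \<open>The semiring axioms of the paper do not make \<open>0\<close> absorbing; here this follows from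
  the archimedean property.\<close>

lemma zero_mult_eq: "0 * x = (0::'d)"
proof -
  obtain a where "x \<preceq> iota a" using bounded_above by blast
  then have "0 * x \<preceq> 0 * iota a" by (rule natural_le_mult_left)
  moreover have "0 * iota a = 0"
    using phi_mult[of None "Some a"] by (simp add: phi_None iota_def)
  ultimately show ?thesis by (simp add: natural_le_zero_iff)
qed

lemma mult_zero_eq: "x * 0 = (0::'d)"
proof -
  obtain a where "x \<preceq> iota a" using bounded_above by blast
  then have "x * 0 \<preceq> iota a * 0" by (rule natural_le_mult_right)
  then show ?thesis
    using phi_central[of "Some a" 0] by (simp add: iota_def zero_mult_eq natural_le_zero_iff)
qed

lemma unit_bounded_below:
  assumes "u \<in> units_of_sr" shows "\<exists>b. iota b \<preceq> u"
proof -
  obtain v where v: "u * v = 1" using assms by (auto simp: units_of_sr_def)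
  obtain a where "v \<preceq> iota a" using bounded_above by blast
  then have "u * v * iota (- a) \<preceq> u * iota a * iota (- a)"
    by (intro natural_le_mult_right natural_le_mult_left)
  then have "iota (- a) \<preceq> u"
    by (simp add: v mult.assoc iota_mult iota_0)
  then show ?thesis ..
qed

lemma exists_uniform_bracket:
  assumes "finite G"
  shows "\<exists>N. \<forall>g\<in>G. g \<preceq> iota N \<and> (g \<noteq> 0 \<longrightarrow> iota (- N) \<preceq> g)"
proof -
  have "eventually (\<lambda>n. g \<preceq> iota n \<and> (g \<noteq> 0 \<longrightarrow> iota (- n) \<preceq> g)) at_top" for g
  proof -
    obtain a where a: "g \<preceq> iota a" using bounded_above by blast
    obtain b where b: "g \<noteq> 0 \<Longrightarrow> iota b \<preceq> g"
      using unit_bounded_below nonzero_unit by (cases "g = 0") blast+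
    have "g \<preceq> iota n \<and> (g \<noteq> 0 \<longrightarrow> iota (- n) \<preceq> g)" if "max a (- b) \<le> n" for n
    proof -
      have an: "iota a \<preceq> iota n" and nb: "iota (- n) \<preceq> iota b"
        using that by (simp_all add: iota_le_iff)
      show ?thesis using natural_le_trans[OF a an] natural_le_trans[OF nb b] by blast
    qed
    then show ?thesis by (rule eventually_at_top_linorderI)
  qed
  then have "eventually (\<lambda>n. \<forall>g\<in>G. g \<preceq> iota n \<and> (g \<noteq> 0 \<longrightarrow> iota (- n) \<preceq> g)) at_top"
    using assms by (simp add: eventually_ball_finite)
  then show ?thesis by (auto simp: eventually_at_top_linorder)
qed

text \<open>Take the largest \<open>n\<close> with \<open>u t^n \<preceq> 1\<close>; such \<open>n\<close> are bounded above because \<open>u\<close> is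
  bounded below.\<close>

lemma exists_normalized_multiple:
  assumes u: "u \<in> units_of_sr"
  shows "\<exists>n. u * iota n \<preceq> 1 \<and> \<not> u * iota n \<preceq> iota (- 1)"
proof -
  obtain a where a: "u \<preceq> iota a" using bounded_above by blast
  obtain b where b: "iota b \<preceq> u" using unit_bounded_below u by blast
  define S where "S = {n. u * iota n \<preceq> 1} \<inter> {- a..}"
  have S_bounded: "n \<le> - b" if "n \<in> S" for n
  proof -
    have "iota b * iota n \<preceq> u * iota n" using b by (rule natural_le_mult_right)
    also have "u * iota n \<preceq> iota 0" using that by (simp add: S_def iota_0)
    finally show ?thesis by (simp add: iota_mult iota_le_iff)
  qed
  have "- a \<in> S"
    using natural_le_mult_right[OF a, of "iota (- a)"] by (simp add: S_def iota_mult iota_0)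
  have "S \<subseteq> {- a..- b}"
    using S_bounded unfolding S_def by auto
  then have "finite S"
    using finite_subset by blast
  define n where "n = Max S"
  have "n \<in> S" using Max_in \<open>finite S\<close> \<open>- a \<in> S\<close> by (auto simp: n_def)
  have "\<not> u * iota n \<preceq> iota (- 1)"
  proof
    assume "u * iota n \<preceq> iota (- 1)"
    then have "u * iota n * iota 1 \<preceq> iota (- 1) * iota 1" by (rule natural_le_mult_right)
    then have "n + 1 \<in> S" using \<open>n \<in> S\<close> by (simp add: S_def mult.assoc iota_mult iota_0)
    then show False using Max_ge[OF \<open>finite S\<close>] by (force simp: n_def)
  qed
  with \<open>n \<in> S\<close> show ?thesis unfolding S_def by blast
qed

lemma mult_bracketed:
  assumes "g \<preceq> iota N" "g \<noteq> 0 \<longrightarrow> iota (- N) \<preceq> g"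
  shows "iota k * g \<preceq> iota (k + N)" and "g \<noteq> 0 \<Longrightarrow> iota (k - N) \<preceq> iota k * g"
proof -
  show "iota k * g \<preceq> iota (k + N)"
    using natural_le_mult_left[OF assms(1), of "iota k"] by (simp add: iota_mult)
  show "iota (k - N) \<preceq> iota k * g" if "g \<noteq> 0"
    using natural_le_mult_left[of "iota (- N)" g "iota k"] assms(2) that by (simp add: iota_mult)
qed

lemma lower_bound_of_large_term:
  assumes "g \<preceq> iota N" "g \<noteq> 0 \<longrightarrow> iota (- N) \<preceq> g" and large: "\<not> phi c * g \<preceq> iota (- 1)"
  shows "iota (- (2 * N)) \<preceq> phi c * g"
proof -
  obtain k where k: "phi c = iota k"
    using large by (cases c) (auto simp: iota_def phi_None zero_mult_eq zero_natural_le)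
  have "g \<noteq> 0"
    using large by (auto simp: mult_zero_eq zero_natural_le)
  have "\<not> k + N \<le> - 1"
  proof
    assume "k + N \<le> - 1"
    then have "iota k * g \<preceq> iota (- 1)"
      by (intro natural_le_trans[OF mult_bracketed(1)[OF assms(1,2)]]) (simp add: iota_le_iff)
    with large k show False by simp
  qed
  then have "iota (- (2 * N)) \<preceq> iota (k - N)" by (simp add: iota_le_iff)
  also have "\<dots> \<preceq> phi c * g" using mult_bracketed(2)[OF assms(1,2) \<open>g \<noteq> 0\<close>] k by simp
  finally show ?thesis .
qed

text \<open>Terms with exponent below \<open>M - N\<close> are absorbed by the cutoff \<open>t^M\<close>.\<close>

lemma truncated_term_cases:
  assumes "g \<preceq> iota N" "g \<noteq> 0 \<longrightarrow> iota (- N) \<preceq> g" and "phi c * g \<preceq> 1"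
  shows "phi c * g + iota M \<in> insert (iota M) ((\<lambda>k. iota k * g + iota M) ` {M - N..N})"
proof (cases "c = None \<or> g = 0")
  case True
  then show ?thesis by (auto simp: phi_None zero_mult_eq mult_zero_eq)
next
  case False
  then obtain k where k: "phi c = iota k" and "g \<noteq> 0" by (auto simp: iota_def)
  have "iota (k - N) \<preceq> iota k * g" using mult_bracketed(2)[OF assms(1,2) \<open>g \<noteq> 0\<close>] .
  also have "\<dots> \<preceq> iota 0" using assms(3) k by (simp add: iota_0)
  finally have "k \<le> N" by (simp add: iota_le_iff)
  show ?thesis
  proof (cases "k < M - N")
    case True
    have "iota k * g \<preceq> iota (k + N)" using mult_bracketed(1)[OF assms(1,2)] .
    also have "\<dots> \<preceq> iota M" using True by (simp add: iota_le_iff)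
    finally show ?thesis using k by (simp add: natural_le_def)
  next
    case False
    with \<open>k \<le> N\<close> k show ?thesis by auto
  qed
qed

lemma finite_normalized:
  assumes "finite_semialgebra phi"
  shows "finite {x. x \<preceq> 1 \<and> \<not> x \<preceq> iota (- 1)}"
proof -
  obtain G :: "'d set" where G: "finite G" "\<And>x. \<exists>c. x = (\<Sum>g\<in>G. phi (c g) * g)"
    using assms by (auto simp: finite_semialgebra_def)
  obtain N where N: "\<And>g. g \<in> G \<Longrightarrow> g \<preceq> iota N" "\<And>g. g \<in> G \<Longrightarrow> g \<noteq> 0 \<longrightarrow> iota (- N) \<preceq> g"
    using exists_uniform_bracket[OF G(1)] by blast
  define M where "M = - (2 * N)"
  define T where "T = (\<Union>g\<in>G. insert (iota M) ((\<lambda>k. iota k * g + iota M) ` {M - N..N}))"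
  have "{x. x \<preceq> 1 \<and> \<not> x \<preceq> iota (- 1)} \<subseteq> (\<lambda>A. iota M + \<Sum> A) ` Pow T"
  proof safe
    fix x assume x: "x \<preceq> 1" "\<not> x \<preceq> iota (- 1)"
    obtain c where c: "x = (\<Sum>g\<in>G. phi (c g) * g)" using G(2) by blast
    have term_le: "phi (c g) * g \<preceq> x" if "g \<in> G" for g
      using member_natural_le_sum[OF add_idem G(1) that] c by simp
    obtain g where g: "g \<in> G" "\<not> phi (c g) * g \<preceq> iota (- 1)"
      using x(2) sum_natural_le[OF G(1), of "\<lambda>g. phi (c g) * g"] c by blast
    have "iota M \<preceq> phi (c g) * g"
      unfolding M_def using lower_bound_of_large_term[OF N[OF g(1)] g(2)] .
    also have "\<dots> \<preceq> x" using term_le[OF g(1)] .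
    finally have "x = iota M + \<Sum> ((\<lambda>g. phi (c g) * g + iota M) ` G)"
      using sum_eq_absorb[OF add_idem G(1)] c by simp
    moreover have "phi (c g) * g + iota M \<in> T" if "g \<in> G" for g
    proof -
      have "phi (c g) * g \<preceq> 1" using term_le[OF that] x(1) by (rule natural_le_trans)
      with that show ?thesis
        using truncated_term_cases[OF N[OF that]] unfolding T_def by blast
    qed
    ultimately show "x \<in> (\<lambda>A. iota M + \<Sum> A) ` Pow T" by blast
  qed
  moreover have "finite T" using G(1) by (simp add: T_def)
  ultimately show ?thesis by (meson finite_Pow_iff finite_imageI finite_subset)
qed

definition coset :: "'d \<Rightarrow> 'd set" where
  "coset x = range (\<lambda>n. x * iota n)"

lemma unit_quotient_eq: "unit_quotient phi = coset ` units_of_sr"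
  by (simp add: unit_quotient_def coset_def zmax_units_eq_range_Some iota_def image_image)

lemma coset_mult_iota: "coset (u * iota n) = coset u"
proof -
  have "coset (u * iota n) = (\<lambda>m. u * iota m) ` range ((+) n)"
    by (simp only: coset_def image_image mult.assoc iota_mult)
  then show ?thesis by (simp add: coset_def)
qed

end

theorem mainTheorem14:
  fixes phi :: "zmax \<Rightarrow> 'd::{semiring,comm_monoid_add,monoid_mult}"
  assumes "zmax_semialgebra phi"
    and "finite_semialgebra phi"
    and "archimedean_over phi"
  shows "finite (unit_quotient phi)"
proof -
  interpret archimedean_zmax_semialgebra phi
    using assms by unfold_locales
  let ?normalized = "{x. x \<preceq> 1 \<and> \<not> x \<preceq> iota (- 1)}"
  have "coset u \<in> coset ` ?normalized" if u: "u \<in> units_of_sr" for u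
  proof -
    obtain n where "u * iota n \<in> ?normalized"
      using exists_normalized_multiple[OF u] by blast
    then show ?thesis by (metis coset_mult_iota image_eqI)
  qed
  then have "unit_quotient phi \<subseteq> coset ` ?normalized"
    by (auto simp: unit_quotient_eq)
  then show ?thesis
    using finite_normalized[OF assms(2)] finite_subset by blast
qed

end
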